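(* Let $\beta>0$ and let $\{M(N)\}_{N\ge1}$ be a sequence of positive integers. If the family $\{Z^{f,\beta,h_c^a(\beta)}_{N,M(N),\omega}\}_{N\ge1}$ is uniformly integrable under $\mathbb P$, then there exists $\zeta>0$ such that for every sequence of events $\{A_N\}_{N\ge1}$ (events for $\tau$) with $\lim_{N\to\infty}\mathbf P(A_N)=0$ there is $N_0\in\mathbb N$ such that $$\inf_{N\ge N_0}\mathbb P\Big(\mathbf P^{f,\beta,h_c^a(\beta)}_{N,M(N),\omega}(A_N)\le\tfrac12\ \text{ and }\ Z^{f,\beta,h_c^a(\beta)}_{N,M(N),\omega}>\tfrac12\Big)\ge\zeta.$$
   Context: Let $\mathbb N=\{1,2,\dots\}$. Fix $\alpha\ge0$ and a slowly varying function $L$, and set $K(n)=L(n)n^{-(2+\alpha)}$, normalized so that $\sum_{n,m\in\mathbb N}K(n+m)=1$. Let $\tau$ be a bivariate renewal process with law $\mathbf P$: $\tau_0=(0,0)$, i.i.d. increments with $\mathbf P(\tau_1=(n,m))=K(n+m)$, $n,m\in\mathbb N$; $\tau$ is identified with the random set of its points. Let $\omega=\{\omega_{n,m}\}$ be i.i.d. real random variables with law $\mathbb P$, centered, unit variance, $Q(\beta)=\mathbb E[e^{\beta\omega_{1,1}}]<\infty$ for all $\beta$; set $h_c^a(\beta)=-\log Q(\beta)$. The free partition function is $Z^{f,\beta,h}_{N,M,\omega}=\mathbf E[\exp(\sum_{n=1}^N\sum_{m=1}^M(\beta\omega_{n,m}+h)\mathbf 1_{(n,m)\in\tau})]$, and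 $\mathbf P^{f,\beta,h}_{N,M,\omega}$ is the probability measure on $\tau$ with density $\exp(\sum_{n=1}^N\sum_{m=1}^M(\beta\omega_{n,m}+h)\mathbf 1_{(n,m)\in\tau})/Z^{f,\beta,h}_{N,M,\omega}$ with respect to $\mathbf P$. *)

theory Defs
  imports "HOL-Probability.Probability"
begin

definition slowly_varying :: "(real \<Rightarrow> real) \<Rightarrow> bool" where
  "slowly_varying L \<longleftrightarrow> L \<in> borel_measurable borel \<and> (\<forall>x>0. L x > 0) \<and>
     (\<forall>c>0. ((\<lambda>x. L (c * x) / L x) \<longlongrightarrow> 1) at_top)"

text \<open>The renewal process is realised on the space of i.i.d. increment streams.
  Point number k of tau is the k-th partial sum of the increments (tau_0 = (0,0)).\<close>
definition renewal_point :: "(nat \<times> nat) stream \<Rightarrow> nat \<Rightarrow> nat \<times> nat" where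
  "renewal_point s k = ((\<Sum>i<k. fst (s !! i)), (\<Sum>i<k. snd (s !! i)))"

definition renewal_set :: "(nat \<times> nat) stream \<Rightarrow> (nat \<times> nat) set" where
  "renewal_set s = range (renewal_point s)"

definition renewal_law :: "(nat \<times> nat) pmf \<Rightarrow> (nat \<times> nat) stream measure" where
  "renewal_law inc = stream_space (measure_pmf inc)"

definition hamiltonian ::
  "real \<Rightarrow> real \<Rightarrow> nat \<Rightarrow> nat \<Rightarrow> (nat \<times> nat \<Rightarrow> real) \<Rightarrow> (nat \<times> nat) stream \<Rightarrow> real" where
  "hamiltonian \<beta> h N M \<omega> s =
     (\<Sum>n\<in>{1..N}. \<Sum>m\<in>{1..M}. (\<beta> * \<omega> (n, m) + h) * indicator (renewal_set s) (n, m))"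

definition free_Z ::
  "(nat \<times> nat) pmf \<Rightarrow> real \<Rightarrow> real \<Rightarrow> nat \<Rightarrow> nat \<Rightarrow> (nat \<times> nat \<Rightarrow> real) \<Rightarrow> real" where
  "free_Z inc \<beta> h N M \<omega> = (\<integral>s. exp (hamiltonian \<beta> h N M \<omega> s) \<partial>renewal_law inc)"

definition polymer_prob ::
  "(nat \<times> nat) pmf \<Rightarrow> real \<Rightarrow> real \<Rightarrow> nat \<Rightarrow> nat \<Rightarrow> (nat \<times> nat \<Rightarrow> real)
     \<Rightarrow> (nat \<times> nat) stream set \<Rightarrow> real" where
  "polymer_prob inc \<beta> h N M \<omega> A =
     (\<integral>s. indicator A s * exp (hamiltonian \<beta> h N M \<omega> s) \<partial>renewal_law inc) / free_Z inc \<beta> h N M \<omega>"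

definition uniformly_integrable :: "'a measure \<Rightarrow> 'i set \<Rightarrow> ('i \<Rightarrow> 'a \<Rightarrow> real) \<Rightarrow> bool" where
  "uniformly_integrable \<Omega> I f \<longleftrightarrow> (\<forall>i\<in>I. f i \<in> borel_measurable \<Omega>) \<and>
     ((\<lambda>K::real. SUP i\<in>I. \<integral>\<^sup>+ x. ennreal \<bar>f i x\<bar> * indicator {x. \<bar>f i x\<bar> > K} x \<partial>\<Omega>)
        \<longlongrightarrow> 0) at_top"

end

theory Submission
  imports Defs
begin

text \<open>At \<open>h = h_c^a(\<beta>) = -log Q(\<beta>)\<close> every factor \<open>exp (\<beta> \<omega>_{n,m} + h)\<close> has mean one, so by
  independence the disorder average of \<open>exp H(\<omega>, \<tau>)\<close> is 1 for every fixed renewal trajectory.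
  By Tonelli, \<open>E Z = 1\<close> and \<open>E Z(A) = P(A)\<close>, where \<open>Z(A)\<close> is the partition function
  restricted to the event \<open>A\<close>. Uniform integrability upgrades \<open>E Z = 1\<close> to a lower bound
  \<open>P(Z > 1/2) \<ge> \<zeta>\<close> uniform in \<open>N\<close>, while Markov's inequality gives
  \<open>P(Z(A_N) \<ge> 1/4) \<le> 4 P(A_N) \<rightarrow> 0\<close>; off that event, \<open>Z > 1/2\<close> forces
  \<open>P^f(A_N) = Z(A_N) / Z \<le> 1/2\<close>.\<close>

lemma (in product_prob_space) nn_integral_prod_coordinates:
  assumes "finite J" "J \<subseteq> I" and f: "\<And>i. i \<in> J \<Longrightarrow> f i \<in> borel_measurable (M i)"
  shows "(\<integral>\<^sup>+\<omega>. (\<Prod>i\<in>J. f i (\<omega> i)) \<partial>Pi\<^sub>M I M) = (\<Prod>i\<in>J. \<integral>\<^sup>+x. f i x \<partial>M i)"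
proof -
  have "(\<lambda>\<omega>. \<Prod>i\<in>J. f i (\<omega> i)) \<in> borel_measurable (Pi\<^sub>M J M)"
    using f by (intro borel_measurable_prod_ennreal measurable_compose[OF measurable_component_singleton]) auto
  then have "(\<integral>\<^sup>+\<omega>. (\<Prod>i\<in>J. f i (\<omega> i)) \<partial>Pi\<^sub>M I M)
      = (\<integral>\<^sup>+\<omega>. (\<Prod>i\<in>J. f i (\<omega> i)) \<partial>distr (Pi\<^sub>M I M) (Pi\<^sub>M J M) (\<lambda>\<omega>. restrict \<omega> J))"
    using assms by (subst nn_integral_distr) (auto intro!: measurable_restrict_subset nn_integral_cong prod.cong)
  also have "\<dots> = (\<Prod>i\<in>J. \<integral>\<^sup>+x. f i x \<partial>M i)"
    using assms by (simp add: distr_PiM_restrict_finite product_nn_integral_prod)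
  finally show ?thesis .
qed

lemma uniformly_integrable_tail_le:
  assumes "uniformly_integrable \<Omega> I f" and "0 < \<epsilon>"
  obtains K where "c \<le> K"
    and "\<And>i. i \<in> I \<Longrightarrow> (\<integral>\<^sup>+x. ennreal \<bar>f i x\<bar> * indicator {x. K < \<bar>f i x\<bar>} x \<partial>\<Omega>) \<le> ennreal \<epsilon>"
proof -
  have "eventually (\<lambda>K. (SUP i\<in>I. \<integral>\<^sup>+x. ennreal \<bar>f i x\<bar> * indicator {x. K < \<bar>f i x\<bar>} x \<partial>\<Omega>) < ennreal \<epsilon>) at_top"
    using assms unfolding uniformly_integrable_def by (intro order_tendstoD(2)) auto
  then obtain K0 where K0: "\<And>K. K0 \<le> K \<Longrightarrow>
      (SUP i\<in>I. \<integral>\<^sup>+x. ennreal \<bar>f i x\<bar> * indicator {x. K < \<bar>f i x\<bar>} x \<partial>\<Omega>) < ennreal \<epsilon>"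
    by (auto simp: eventually_at_top_linorder)
  show ?thesis
  proof (rule that[of "max c K0"])
    fix i assume "i \<in> I"
    then have "(\<integral>\<^sup>+x. ennreal \<bar>f i x\<bar> * indicator {x. max c K0 < \<bar>f i x\<bar>} x \<partial>\<Omega>)
        \<le> (SUP i\<in>I. \<integral>\<^sup>+x. ennreal \<bar>f i x\<bar> * indicator {x. max c K0 < \<bar>f i x\<bar>} x \<partial>\<Omega>)"
      by (rule SUP_upper)
    also have "\<dots> < ennreal \<epsilon>"
      by (rule K0) simp
    finally show "(\<integral>\<^sup>+x. ennreal \<bar>f i x\<bar> * indicator {x. max c K0 < \<bar>f i x\<bar>} x \<partial>\<Omega>) \<le> ennreal \<epsilon>"
      by simp
  qed simp
qed

lemma (in prob_space) mean_le_threshold_plus_tail: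
  assumes [measurable]: "f \<in> borel_measurable M" and f_nonneg: "\<And>x. 0 \<le> f x"
    and mean: "(\<integral>\<^sup>+x. ennreal (f x) \<partial>M) = ennreal m"
    and tail: "(\<integral>\<^sup>+x. ennreal \<bar>f x\<bar> * indicator {x. K < \<bar>f x\<bar>} x \<partial>M) \<le> ennreal \<epsilon>"
    and "0 \<le> a" "0 \<le> K" "0 \<le> \<epsilon>"
  shows "m \<le> a + K * prob {x \<in> space M. a < f x} + \<epsilon>"
proof -
  define E where "E = {x \<in> space M. a < f x}"
  define T where "T = (\<lambda>x. ennreal \<bar>f x\<bar> * indicator {x. K < \<bar>f x\<bar>} x)"
  have [measurable]: "E \<in> sets M" "T \<in> borel_measurable M"
    unfolding E_def T_def by measurable
  have "ennreal (f x) \<le> ennreal a + ennreal K * indicator E x + T x" if "x \<in> space M" for x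
    using that f_nonneg[of x]
    by (cases "a < f x"; cases "K < f x") (auto simp: E_def T_def intro: add_increasing2 add_increasing)
  then have "ennreal m \<le> (\<integral>\<^sup>+x. ennreal a + ennreal K * indicator E x + T x \<partial>M)"
    unfolding mean[symmetric] by (intro nn_integral_mono) auto
  also have "\<dots> = (\<integral>\<^sup>+x. ennreal a + ennreal K * indicator E x \<partial>M) + (\<integral>\<^sup>+x. T x \<partial>M)"
    by (rule nn_integral_add) auto
  also have "(\<integral>\<^sup>+x. ennreal a + ennreal K * indicator E x \<partial>M) = ennreal a + ennreal K * ennreal (prob E)"
    by (subst nn_integral_add) (auto simp: nn_integral_cmult_indicator emeasure_space_1 emeasure_eq_measure prob_space)
  also have "ennreal a + ennreal K * ennreal (prob E) + (\<integral>\<^sup>+x. T x \<partial>M)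
      \<le> ennreal a + ennreal K * ennreal (prob E) + ennreal \<epsilon>"
    using tail unfolding T_def by (rule add_left_mono)
  also have "\<dots> = ennreal (a + K * prob E + \<epsilon>)"
    using \<open>0 \<le> a\<close> \<open>0 \<le> K\<close> \<open>0 \<le> \<epsilon>\<close> by (simp add: ennreal_plus ennreal_mult)
  finally have "ennreal m \<le> ennreal (a + K * prob E + \<epsilon>)" .
  then show ?thesis
    using \<open>0 \<le> a\<close> \<open>0 \<le> K\<close> \<open>0 \<le> \<epsilon>\<close> by (subst (asm) ennreal_le_iff) (auto simp: E_def)
qed

lemma uniformly_integrable_prob_gt_lower_bound:
  assumes "prob_space \<Omega>" and UI: "uniformly_integrable \<Omega> I f"
    and nonneg: "\<And>i x. i \<in> I \<Longrightarrow> 0 \<le> f i x"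
    and mean_one: "\<And>i. i \<in> I \<Longrightarrow> (\<integral>\<^sup>+x. ennreal (f i x) \<partial>\<Omega>) = 1"
    and "0 \<le> a" "a < 1"
  obtains \<zeta> where "0 < \<zeta>" "\<And>i. i \<in> I \<Longrightarrow> \<zeta> \<le> measure \<Omega> {x \<in> space \<Omega>. a < f i x}"
proof -
  interpret prob_space \<Omega> by fact
  obtain K where "1 \<le> K" and tail:
    "\<And>i. i \<in> I \<Longrightarrow> (\<integral>\<^sup>+x. ennreal \<bar>f i x\<bar> * indicator {x. K < \<bar>f i x\<bar>} x \<partial>\<Omega>) \<le> ennreal ((1 - a) / 2)"
    using uniformly_integrable_tail_le[OF UI, of "(1 - a) / 2" 1] \<open>a < 1\<close> by auto
  show ?thesis
  proof (rule that[of "(1 - a) / (2 * K)"])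
    show "0 < (1 - a) / (2 * K)"
      using \<open>1 \<le> K\<close> \<open>a < 1\<close> by simp
    fix i assume "i \<in> I"
    have "f i \<in> borel_measurable \<Omega>"
      using UI \<open>i \<in> I\<close> by (simp add: uniformly_integrable_def)
    then have "1 \<le> a + K * prob {x \<in> space \<Omega>. a < f i x} + (1 - a) / 2"
      using nonneg mean_one tail \<open>i \<in> I\<close> \<open>0 \<le> a\<close> \<open>1 \<le> K\<close> \<open>a < 1\<close>
      by (intro mean_le_threshold_plus_tail) (simp_all flip: ennreal_1)
    then show "(1 - a) / (2 * K) \<le> prob {x \<in> space \<Omega>. a < f i x}"
      using \<open>1 \<le> K\<close> by (simp add: field_simps)
  qed
qed

lemma (in prob_space) prob_ratio_le_half_lower_bound:
  assumes [measurable]: "Z \<in> borel_measurable M" "W \<in> borel_measurable M"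
    and W_nonneg: "\<And>x. 0 \<le> W x" and W_mean: "(\<integral>\<^sup>+x. ennreal (W x) \<partial>M) = ennreal w" and "0 \<le> w"
  shows "prob {x \<in> space M. 1/2 < Z x} - 4 * w \<le> prob {x \<in> space M. W x / Z x \<le> 1/2 \<and> 1/2 < Z x}"
proof -
  have "integrable M W"
    using W_nonneg W_mean by (intro integrableI_nn_integral_finite) auto
  moreover have "(\<integral>x. W x \<partial>M) = w"
    using W_nonneg W_mean \<open>0 \<le> w\<close> by (simp add: integral_eq_nn_integral)
  ultimately have Markov: "prob {x \<in> space M. 1/4 \<le> W x} \<le> 4 * w"
    using W_nonneg integral_Markov_inequality_measure[of M W "space M" "1/4"] by simp
  have "{x \<in> space M. 1/2 < Z x}
      \<subseteq> {x \<in> space M. W x / Z x \<le> 1/2 \<and> 1/2 < Z x} \<union> {x \<in> space M. 1/4 \<le> W x}"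
    by (auto simp: divide_le_eq)
  then have "prob {x \<in> space M. 1/2 < Z x}
      \<le> prob {x \<in> space M. W x / Z x \<le> 1/2 \<and> 1/2 < Z x} + prob {x \<in> space M. 1/4 \<le> W x}"
    by (intro order.trans[OF finite_measure_mono measure_Un_le]) auto
  with Markov show ?thesis
    by simp
qed

lemma (in prob_space) eventually_prob_ratio_le_half:
  assumes "0 < \<zeta>" and Z_large: "\<And>N. 1 \<le> N \<Longrightarrow> \<zeta> \<le> prob {x \<in> space M. 1/2 < Z N x}"
    and [measurable]: "\<And>N. Z N \<in> borel_measurable M" "\<And>N. W N \<in> borel_measurable M"
    and W_nonneg: "\<And>N x. 0 \<le> W N x"
    and W_mean: "\<And>N. (\<integral>\<^sup>+x. ennreal (W N x) \<partial>M) = ennreal (p N)" "\<And>N. 0 \<le> p N"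
    and "p \<longlonglongrightarrow> 0"
  shows "\<exists>N0\<ge>1. \<forall>N\<ge>N0. \<zeta> / 2 \<le> prob {x \<in> space M. W N x / Z N x \<le> 1/2 \<and> 1/2 < Z N x}"
proof -
  have "eventually (\<lambda>N. p N < \<zeta> / 8) sequentially"
    using \<open>p \<longlonglongrightarrow> 0\<close> \<open>0 < \<zeta>\<close> by (intro order_tendstoD(2)) auto
  then obtain N1 where small: "\<And>N. N1 \<le> N \<Longrightarrow> p N < \<zeta> / 8"
    by (auto simp: eventually_sequentially)
  have "\<zeta> / 2 \<le> prob {x \<in> space M. W N x / Z N x \<le> 1/2 \<and> 1/2 < Z N x}" if "max N1 1 \<le> N" for N
    using prob_ratio_le_half_lower_bound[of "Z N" "W N" "p N"] W_nonneg W_mean Z_large[of N] small[of N] that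
    by simp
  then show ?thesis
    by (intro exI[of _ "max N1 1"]) auto
qed

lemma nn_integral_exp_minus_log_mgf:
  assumes "prob_space \<mu>" and integrable_exp: "integrable \<mu> (\<lambda>x. exp (\<beta> * x))"
  shows "(\<integral>\<^sup>+x. ennreal (exp (\<beta> * x + - ln (\<integral>x. exp (\<beta> * x) \<partial>\<mu>))) \<partial>\<mu>) = 1"
proof -
  interpret prob_space \<mu> by fact
  define Q where "Q = (\<integral>x. exp (\<beta> * x) \<partial>\<mu>)"
  have "0 < Q"
    using integral_less_AE_space[of "\<lambda>_. 0" "\<lambda>x. exp (\<beta> * x)"] integrable_exp
    by (simp add: Q_def emeasure_space_1)
  then have "(\<integral>\<^sup>+x. ennreal (exp (\<beta> * x + - ln Q)) \<partial>\<mu>) = (\<integral>\<^sup>+x. ennreal (exp (\<beta> * x) / Q) \<partial>\<mu>)"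
    by (simp add: exp_diff)
  also have "\<dots> = ennreal (\<integral>x. exp (\<beta> * x) / Q \<partial>\<mu>)"
    using \<open>0 < Q\<close> integrable_exp by (intro nn_integral_eq_integral) auto
  also have "\<dots> = 1"
    using \<open>0 < Q\<close> by (simp add: Q_def)
  finally show ?thesis
    by (simp add: Q_def)
qed

lemma prob_space_renewal_law: "prob_space (renewal_law inc)"
  unfolding renewal_law_def by (rule prob_space.prob_space_stream_space[OF prob_space_measure_pmf])

lemma measurable_renewal_point[measurable]:
  "(\<lambda>s. renewal_point s k) \<in> measurable (renewal_law inc) (count_space UNIV)"
proof -
  have "(\<lambda>s. renewal_point s k) = (\<lambda>xs. (\<Sum>i<k. fst (xs ! i), \<Sum>i<k. snd (xs ! i))) \<circ> stake k"
    by (simp add: fun_eq_iff renewal_point_def)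
  moreover have "stake k \<in> measurable (renewal_law inc) (count_space UNIV)"
    using measurable_stake unfolding renewal_law_def
    by (subst measurable_cong_sets[OF sets_stream_space_cong[of _ "count_space UNIV"] refl]) simp_all
  ultimately show ?thesis
    by (simp add: measurable_comp)
qed

lemma measurable_indicator_renewal_set[measurable]:
  "(\<lambda>s. indicator (renewal_set s) p :: real) \<in> borel_measurable (renewal_law inc)"
proof -
  have "{s \<in> space (renewal_law inc). p \<in> renewal_set s}
      = (\<Union>k. {s \<in> space (renewal_law inc). renewal_point s k = p})"
    by (auto simp: renewal_set_def)
  also have "\<dots> \<in> sets (renewal_law inc)"
    by measurable
  finally show ?thesis
    by (rule borel_measurable_indicator')
qed

lemma hamiltonian_eq_sum_contacts:
  "hamiltonian \<beta> h N M \<omega> s = (\<Sum>p\<in>({1..N} \<times> {1..M}) \<inter> renewal_set s. \<beta> * \<omega> p + h)"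
  unfolding hamiltonian_def sum.cartesian_product
  by (simp add: sum.inter_restrict indicator_def if_distrib cong: if_cong)

lemma abs_hamiltonian_le:
  "\<bar>hamiltonian \<beta> h N M \<omega> s\<bar> \<le> (\<Sum>p\<in>{1..N} \<times> {1..M}. \<bar>\<beta> * \<omega> p + h\<bar>)"
proof -
  have "\<bar>hamiltonian \<beta> h N M \<omega> s\<bar> \<le> (\<Sum>p\<in>({1..N} \<times> {1..M}) \<inter> renewal_set s. \<bar>\<beta> * \<omega> p + h\<bar>)"
    unfolding hamiltonian_eq_sum_contacts by (rule sum_abs)
  also have "\<dots> \<le> (\<Sum>p\<in>{1..N} \<times> {1..M}. \<bar>\<beta> * \<omega> p + h\<bar>)"
    by (rule sum_mono2) auto
  finally show ?thesis .
qed

lemma integrable_exp_hamiltonian: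
  "integrable (renewal_law inc) (\<lambda>s. exp (hamiltonian \<beta> h N M \<omega> s))"
proof -
  interpret prob_space "renewal_law inc"
    by (rule prob_space_renewal_law)
  show ?thesis
  proof (rule integrable_const_bound)
    show "AE s in renewal_law inc. norm (exp (hamiltonian \<beta> h N M \<omega> s))
            \<le> exp (\<Sum>p\<in>{1..N} \<times> {1..M}. \<bar>\<beta> * \<omega> p + h\<bar>)"
      using abs_hamiltonian_le by (intro AE_I2) (simp add: abs_le_iff)
    show "(\<lambda>s. exp (hamiltonian \<beta> h N M \<omega> s)) \<in> borel_measurable (renewal_law inc)"
      unfolding hamiltonian_def by measurable
  qed
qed

lemma measurable_hamiltonian:
  assumes "sets \<mu> = sets borel"
  shows "(\<lambda>(\<omega>, s). hamiltonian \<beta> h N M \<omega> s)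
           \<in> borel_measurable (Pi\<^sub>M UNIV (\<lambda>_. \<mu>) \<Otimes>\<^sub>M renewal_law inc)"
proof -
  have [measurable]: "(\<lambda>\<omega>. \<omega> p) \<in> borel_measurable (Pi\<^sub>M UNIV (\<lambda>_. \<mu>))" for p
    using measurable_component_singleton[of p UNIV "\<lambda>_. \<mu>"]
    by (simp add: measurable_cong_sets[OF refl assms])
  show ?thesis
    unfolding hamiltonian_def case_prod_beta by measurable
qed

lemma nn_integral_exp_hamiltonian_disorder:
  assumes \<mu>: "prob_space \<mu>" "sets \<mu> = sets borel"
    and mean_one: "(\<integral>\<^sup>+x. ennreal (exp (\<beta> * x + h)) \<partial>\<mu>) = 1"
  shows "(\<integral>\<^sup>+\<omega>. ennreal (exp (hamiltonian \<beta> h N M \<omega> s)) \<partial>Pi\<^sub>M UNIV (\<lambda>_. \<mu>)) = 1"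
proof -
  interpret product_prob_space "\<lambda>_. \<mu>" UNIV
    using \<mu>(1) by (simp add: product_prob_space_def product_prob_space_axioms_def
        product_sigma_finite_def prob_space_imp_sigma_finite)
  define C where "C = ({1..N} \<times> {1..M}) \<inter> renewal_set s"
  have "finite C"
    unfolding C_def by simp
  then have "ennreal (exp (hamiltonian \<beta> h N M \<omega> s)) = (\<Prod>p\<in>C. ennreal (exp (\<beta> * \<omega> p + h)))" for \<omega>
    by (simp add: hamiltonian_eq_sum_contacts C_def exp_sum prod_ennreal)
  then have "(\<integral>\<^sup>+\<omega>. ennreal (exp (hamiltonian \<beta> h N M \<omega> s)) \<partial>Pi\<^sub>M UNIV (\<lambda>_. \<mu>))
      = (\<integral>\<^sup>+\<omega>. (\<Prod>p\<in>C. ennreal (exp (\<beta> * \<omega> p + h))) \<partial>Pi\<^sub>M UNIV (\<lambda>_. \<mu>))"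
    by simp
  also have "\<dots> = (\<Prod>p\<in>C. \<integral>\<^sup>+x. ennreal (exp (\<beta> * x + h)) \<partial>\<mu>)"
    using \<open>finite C\<close> \<mu>(2) by (intro nn_integral_prod_coordinates) (simp_all add: measurable_cong_sets[OF \<mu>(2) refl])
  finally show ?thesis
    by (simp add: mean_one)
qed

definition event_Z ::
  "(nat \<times> nat) pmf \<Rightarrow> real \<Rightarrow> real \<Rightarrow> nat \<Rightarrow> nat \<Rightarrow> (nat \<times> nat \<Rightarrow> real)
     \<Rightarrow> (nat \<times> nat) stream set \<Rightarrow> real" where
  "event_Z inc \<beta> h N M \<omega> A =
     (\<integral>s. indicator A s * exp (hamiltonian \<beta> h N M \<omega> s) \<partial>renewal_law inc)"

lemma polymer_prob_eq_event_Z: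
  "polymer_prob inc \<beta> h N M \<omega> A = event_Z inc \<beta> h N M \<omega> A / free_Z inc \<beta> h N M \<omega>"
  by (simp add: polymer_prob_def event_Z_def)

lemma free_Z_eq_event_Z_space:
  "free_Z inc \<beta> h N M \<omega> = event_Z inc \<beta> h N M \<omega> (space (renewal_law inc))"
  unfolding free_Z_def event_Z_def by (rule Bochner_Integration.integral_cong) auto

lemma event_Z_nonneg: "0 \<le> event_Z inc \<beta> h N M \<omega> A"
  by (simp add: event_Z_def)

lemma free_Z_nonneg: "0 \<le> free_Z inc \<beta> h N M \<omega>"
  by (simp add: free_Z_def)

lemma borel_measurable_event_Z:
  assumes "sets \<mu> = sets borel" and "A \<in> sets (renewal_law inc)"
  shows "(\<lambda>\<omega>. event_Z inc \<beta> h N M \<omega> A) \<in> borel_measurable (Pi\<^sub>M UNIV (\<lambda>_. \<mu>))"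
proof -
  interpret prob_space "renewal_law inc"
    by (rule prob_space_renewal_law)
  have [measurable]: "(\<lambda>(\<omega>, s). hamiltonian \<beta> h N M \<omega> s)
           \<in> borel_measurable (Pi\<^sub>M UNIV (\<lambda>_. \<mu>) \<Otimes>\<^sub>M renewal_law inc)"
    using assms(1) by (rule measurable_hamiltonian)
  show ?thesis
    unfolding event_Z_def using assms(2) by measurable
qed

lemma borel_measurable_free_Z:
  assumes "sets \<mu> = sets borel"
  shows "(\<lambda>\<omega>. free_Z inc \<beta> h N M \<omega>) \<in> borel_measurable (Pi\<^sub>M UNIV (\<lambda>_. \<mu>))"
  unfolding free_Z_eq_event_Z_space using assms by (rule borel_measurable_event_Z) simp

lemma nn_integral_event_Z:
  assumes \<mu>: "prob_space \<mu>" "sets \<mu> = sets borel"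
    and mean_one: "(\<integral>\<^sup>+x. ennreal (exp (\<beta> * x + h)) \<partial>\<mu>) = 1"
    and A: "A \<in> sets (renewal_law inc)"
  shows "(\<integral>\<^sup>+\<omega>. ennreal (event_Z inc \<beta> h N M \<omega> A) \<partial>Pi\<^sub>M UNIV (\<lambda>_. \<mu>)) = emeasure (renewal_law inc) A"
proof -
  interpret R: prob_space "renewal_law inc"
    by (rule prob_space_renewal_law)
  interpret \<Omega>: prob_space "Pi\<^sub>M UNIV (\<lambda>_. \<mu>)"
    using \<mu>(1) by (rule prob_space_PiM)
  interpret pair_sigma_finite "Pi\<^sub>M UNIV (\<lambda>_. \<mu>)" "renewal_law inc" ..
  have [measurable]: "(\<lambda>(\<omega>, s). hamiltonian \<beta> h N M \<omega> s)
           \<in> borel_measurable (Pi\<^sub>M UNIV (\<lambda>_. \<mu>) \<Otimes>\<^sub>M renewal_law inc)"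
    using \<mu>(2) by (rule measurable_hamiltonian)
  have "ennreal (event_Z inc \<beta> h N M \<omega> A)
      = (\<integral>\<^sup>+s. indicator A s * ennreal (exp (hamiltonian \<beta> h N M \<omega> s)) \<partial>renewal_law inc)" for \<omega>
    using integrable_mult_indicator[OF A integrable_exp_hamiltonian]
    by (simp add: event_Z_def nn_integral_eq_integral indicator_mult_ennreal mult.commute)
  then have "(\<integral>\<^sup>+\<omega>. ennreal (event_Z inc \<beta> h N M \<omega> A) \<partial>Pi\<^sub>M UNIV (\<lambda>_. \<mu>))
      = (\<integral>\<^sup>+s. \<integral>\<^sup>+\<omega>. indicator A s * ennreal (exp (hamiltonian \<beta> h N M \<omega> s)) \<partial>Pi\<^sub>M UNIV (\<lambda>_. \<mu>)
           \<partial>renewal_law inc)"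
    using A by (simp add: Fubini'[symmetric])
  also have "\<dots> = (\<integral>\<^sup>+s. indicator A s * (\<integral>\<^sup>+\<omega>. ennreal (exp (hamiltonian \<beta> h N M \<omega> s)) \<partial>Pi\<^sub>M UNIV (\<lambda>_. \<mu>))
           \<partial>renewal_law inc)"
  proof (intro nn_integral_cong nn_integral_cmult)
    fix s assume "s \<in> space (renewal_law inc)"
    then show "(\<lambda>\<omega>. ennreal (exp (hamiltonian \<beta> h N M \<omega> s))) \<in> borel_measurable (Pi\<^sub>M UNIV (\<lambda>_. \<mu>))"
      using measurable_Pair1[of "\<lambda>(\<omega>, s). ennreal (exp (hamiltonian \<beta> h N M \<omega> s))"] by simp
  qed
  also have "\<dots> = emeasure (renewal_law inc) A"
    using A by (simp add: nn_integral_exp_hamiltonian_disorder[OF \<mu> mean_one])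
  finally show ?thesis .
qed

lemma nn_integral_free_Z:
  assumes "prob_space \<mu>" "sets \<mu> = sets borel"
    and "(\<integral>\<^sup>+x. ennreal (exp (\<beta> * x + h)) \<partial>\<mu>) = 1"
  shows "(\<integral>\<^sup>+\<omega>. ennreal (free_Z inc \<beta> h N M \<omega>) \<partial>Pi\<^sub>M UNIV (\<lambda>_. \<mu>)) = 1"
  unfolding free_Z_eq_event_Z_space using nn_integral_event_Z[OF assms sets.top]
  by (simp add: prob_space.emeasure_space_1[OF prob_space_renewal_law])

theorem proposition3p1:
  fixes \<alpha> :: real and L :: "real \<Rightarrow> real" and K :: "nat \<Rightarrow> real"
    and inc :: "(nat \<times> nat) pmf" and \<mu> :: "real measure"
    and \<beta> :: real and M :: "nat \<Rightarrow> nat"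
  assumes alpha: "\<alpha> \<ge> 0"
    and L_sv: "slowly_varying L"
    and K_def: "\<And>n. K n = L (real n) * real n powr (- (2 + \<alpha>))"
    and K_norm: "((\<lambda>(n, m). K (n + m)) has_sum 1) ({1..} \<times> {1..})"
    and inc_law: "\<And>n m. pmf inc (n, m) = (if 1 \<le> n \<and> 1 \<le> m then K (n + m) else 0)"
    and mu_prob: "prob_space \<mu>"
    and mu_borel: "sets \<mu> = sets borel"
    and mu_centered: "integrable \<mu> (\<lambda>x. x) \<and> (\<integral>x. x \<partial>\<mu>) = 0"
    and mu_var: "integrable \<mu> (\<lambda>x. x\<^sup>2) \<and> (\<integral>x. x\<^sup>2 \<partial>\<mu>) = 1"
    and mu_exp: "\<And>b. integrable \<mu> (\<lambda>x. exp (b * x))"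
    and beta: "\<beta> > 0"
    and M_pos: "\<And>N. 1 \<le> N \<Longrightarrow> 1 \<le> M N"
    and UI: "uniformly_integrable (Pi\<^sub>M UNIV (\<lambda>_. \<mu>)) {1..}
               (\<lambda>N \<omega>. free_Z inc \<beta> (- ln (\<integral>x. exp (\<beta> * x) \<partial>\<mu>)) N (M N) \<omega>)"
  shows "\<exists>\<zeta>>0. \<forall>A :: nat \<Rightarrow> (nat \<times> nat) stream set.
           (\<forall>N. A N \<in> sets (renewal_law inc)) \<longrightarrow>
           (\<lambda>N. measure (renewal_law inc) (A N)) \<longlonglongrightarrow> 0 \<longrightarrow>
           (\<exists>N0\<ge>1. \<forall>N\<ge>N0.
              measure (Pi\<^sub>M UNIV (\<lambda>_. \<mu>))
                {\<omega> \<in> space (Pi\<^sub>M UNIV (\<lambda>_. \<mu>)).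
                   polymer_prob inc \<beta> (- ln (\<integral>x. exp (\<beta> * x) \<partial>\<mu>)) N (M N) \<omega> (A N) \<le> 1/2 \<and>
                   free_Z inc \<beta> (- ln (\<integral>x. exp (\<beta> * x) \<partial>\<mu>)) N (M N) \<omega> > 1/2} \<ge> \<zeta>)"
proof -
  define h where "h = - ln (\<integral>x. exp (\<beta> * x) \<partial>\<mu>)"
  define \<Omega> where "\<Omega> = Pi\<^sub>M UNIV (\<lambda>_::nat \<times> nat. \<mu>)"
  interpret \<Omega>: prob_space \<Omega>
    unfolding \<Omega>_def using mu_prob by (rule prob_space_PiM)
  interpret R: prob_space "renewal_law inc"
    by (rule prob_space_renewal_law)
  have mean_one: "(\<integral>\<^sup>+x. ennreal (exp (\<beta> * x + h)) \<partial>\<mu>) = 1"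
    unfolding h_def using mu_prob mu_exp by (rule nn_integral_exp_minus_log_mgf)
  obtain \<zeta> where "0 < \<zeta>"
    and Z_large: "\<And>N. N \<in> {1..} \<Longrightarrow> \<zeta> \<le> \<Omega>.prob {\<omega> \<in> space \<Omega>. 1/2 < free_Z inc \<beta> h N (M N) \<omega>}"
    using uniformly_integrable_prob_gt_lower_bound[of \<Omega> "{1..}" "\<lambda>N. free_Z inc \<beta> h N (M N)" "1/2"]
      \<Omega>.prob_space_axioms UI nn_integral_free_Z[OF mu_prob mu_borel mean_one]
    by (auto simp: \<Omega>_def h_def free_Z_nonneg)
  show ?thesis
    unfolding h_def[symmetric] \<Omega>_def[symmetric] polymer_prob_eq_event_Z
  proof (intro exI[of _ "\<zeta> / 2"] conjI allI impI)
    fix A assume "\<forall>N. A N \<in> R.events" and "(\<lambda>N. R.prob (A N)) \<longlonglongrightarrow> 0"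
    then show "\<exists>N0\<ge>1. \<forall>N\<ge>N0. \<zeta> / 2 \<le> \<Omega>.prob {\<omega> \<in> space \<Omega>.
        event_Z inc \<beta> h N (M N) \<omega> (A N) / free_Z inc \<beta> h N (M N) \<omega> \<le> 1/2 \<and> 1/2 < free_Z inc \<beta> h N (M N) \<omega>}"
      using \<open>0 < \<zeta>\<close> Z_large mu_borel
      by (intro \<Omega>.eventually_prob_ratio_le_half)
        (auto simp: \<Omega>_def borel_measurable_free_Z borel_measurable_event_Z event_Z_nonneg
          nn_integral_event_Z[OF mu_prob mu_borel mean_one] R.emeasure_eq_measure)
  qed (use \<open>0 < \<zeta>\<close> in simp)
qed

end
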